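(* Let $Q=(q_n)_{n\ge1}$ be a basic sequence that is infinite in limit, let $F$ be a $Q$-special sequence, and let $(a,b,1)\in S_Q$. Then the finite sequence $y_{F,a,b}=\left(\frac{F_{(a,b,c)}}{q_{\phi_Q(a,b,c)}}\right)_{c=1}^a$ is an almost-arithmetic progression-$\left(\frac1a,\frac1a\right)$, and its star discrepancy satisfies $D^*(y_{F,a,b})\le\frac2a$.
   Context: A basic sequence is a sequence $Q=(q_n)_{n\ge1}$ of integers with $q_n\ge 2$; it is infinite in limit if $q_n\to\infty$. $\mathbb{N}$ denotes the positive integers. For each positive integer $j$ let $\nu_j=\min\{N : q_m\ge 2j^2 \text{ for all } m\ge N\}$. Define $l_1=\max(\nu_2-1,1)$ and, recursively for $i\ge 2$, $l_i=\max\big(\min\{k\in\mathbb{N} : l_1+2l_2+\cdots+(i-1)l_{i-1}+ik\ge \nu_{i+1}-1\},1\big)$. Put $L_i=\sum_{j=1}^i jl_j$ (with $L_0=0$). Let $S_Q=\{(a,b,c)\in\mathbb{N}^3 : b\le l_a,\ c\le a\}$ and $\phi_Q(a,b,c)=L_{a-1}+(b-1)a+c$; $\phi_Q$ is a bijection $S_Q\to\mathbb{N}$. A $Q$-special sequence is a family of integers $F=(F_{(a,b,c)})_{(a,b,c)\in S_Q}$ with $F_{(a,b,1)}=0$ for all $(a,b,1)\in S_Q$ and $\frac{F_{(a,b,c)}}{q_{\phi_Q(a,b,c)}}\in\left[\frac{c-1}{a}-\frac{1}{2a^2},\frac{c-1}{a}+\frac{1}{2a^2}\right]$ for $(a,b,c)\in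 S_Q$ with $c>1$. For $0\le\delta<1$ and $\varepsilon>0$, a finite sequence $x_1<x_2<\cdots<x_N$ in $[0,1)$ is an almost-arithmetic progression-$(\delta,\varepsilon)$ if there is $\eta$ with $0<\eta\le\varepsilon$ such that $0\le x_1\le\eta+\delta\eta$; $\eta-\delta\eta\le x_{n+1}-x_n\le\eta+\delta\eta$ for $1\le n\le N-1$; and $1-\eta-\delta\eta\le x_N<1$. For a finite sequence $z=(z_1,\dots,z_n)$ in $[0,1)$, its star discrepancy is $D^*(z)=\sup_{0<\gamma\le1}\left|\frac{\#\{k\le n: z_k\in[0,\gamma)\}}{n}-\gamma\right|$. *)

theory Defs
  imports "HOL-Analysis.Analysis"
begin

text \<open>Sequences are indexed from 1; the value at index 0 is irrelevant.\<close>

definition basic_seq :: "(nat \<Rightarrow> nat) \<Rightarrow> bool" where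
  "basic_seq q \<longleftrightarrow> (\<forall>n\<ge>1. q n \<ge> 2)"

definition infinite_in_limit :: "(nat \<Rightarrow> nat) \<Rightarrow> bool" where
  "infinite_in_limit q \<longleftrightarrow> filterlim q at_top sequentially"

definition nuQ :: "(nat \<Rightarrow> nat) \<Rightarrow> nat \<Rightarrow> nat" where
  "nuQ q j = (LEAST N. N \<ge> 1 \<and> (\<forall>m\<ge>N. q m \<ge> 2 * j^2))"

fun lL :: "(nat \<Rightarrow> nat) \<Rightarrow> nat \<Rightarrow> nat \<times> nat" where
  "lL q 0 = (0, 0)"
| "lL q (Suc 0) = (let l1 = max (nuQ q 2 - 1) 1 in (l1, l1))"
| "lL q (Suc (Suc n)) =
     (let i = Suc (Suc n); Lp = snd (lL q (Suc n));
          k = max (LEAST k. k \<ge> 1 \<and> Lp + i * k \<ge> nuQ q (i + 1) - 1) 1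
      in (k, Lp + i * k))"

definition lQ :: "(nat \<Rightarrow> nat) \<Rightarrow> nat \<Rightarrow> nat" where
  "lQ q i = fst (lL q i)"

definition LQ :: "(nat \<Rightarrow> nat) \<Rightarrow> nat \<Rightarrow> nat" where
  "LQ q i = snd (lL q i)"

definition SQ :: "(nat \<Rightarrow> nat) \<Rightarrow> (nat \<times> nat \<times> nat) set" where
  "SQ q = {(a, b, c). a \<ge> 1 \<and> b \<ge> 1 \<and> c \<ge> 1 \<and> b \<le> lQ q a \<and> c \<le> a}"

definition phiQ :: "(nat \<Rightarrow> nat) \<Rightarrow> nat \<times> nat \<times> nat \<Rightarrow> nat" where
  "phiQ q t = (case t of (a, b, c) \<Rightarrow> LQ q (a - 1) + (b - 1) * a + c)"

definition Q_special :: "(nat \<Rightarrow> nat) \<Rightarrow> (nat \<times> nat \<times> nat \<Rightarrow> int) \<Rightarrow> bool" where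
  "Q_special q F \<longleftrightarrow>
     (\<forall>a b. (a, b, 1) \<in> SQ q \<longrightarrow> F (a, b, 1) = 0) \<and>
     (\<forall>a b c. (a, b, c) \<in> SQ q \<and> c > 1 \<longrightarrow>
        real_of_int (F (a, b, c)) / real (q (phiQ q (a, b, c)))
          \<in> {(real c - 1) / real a - 1 / (2 * real a ^ 2) ..
             (real c - 1) / real a + 1 / (2 * real a ^ 2)})"

text \<open>Finite sequence x_1, ..., x_N given as x :: nat => real on indices 1..N.\<close>
definition almost_AP :: "real \<Rightarrow> real \<Rightarrow> nat \<Rightarrow> (nat \<Rightarrow> real) \<Rightarrow> bool" where
  "almost_AP \<delta> \<epsilon> N x \<longleftrightarrow>
     N \<ge> 1 \<and>
     (\<forall>n\<in>{1..N}. 0 \<le> x n \<and> x n < 1) \<and>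
     (\<forall>n\<in>{1..<N}. x n < x (n + 1)) \<and>
     (\<exists>\<eta>. 0 < \<eta> \<and> \<eta> \<le> \<epsilon> \<and>
        0 \<le> x 1 \<and> x 1 \<le> \<eta> + \<delta> * \<eta> \<and>
        (\<forall>n\<in>{1..N-1}. \<eta> - \<delta> * \<eta> \<le> x (n + 1) - x n \<and> x (n + 1) - x n \<le> \<eta> + \<delta> * \<eta>) \<and>
        1 - \<eta> - \<delta> * \<eta> \<le> x N \<and> x N < 1)"

definition star_discrepancy :: "nat \<Rightarrow> (nat \<Rightarrow> real) \<Rightarrow> real" where
  "star_discrepancy n z =
     (SUP \<gamma>\<in>{0<..1}. \<bar>real (card {k\<in>{1..n}. z k < \<gamma>}) / real n - \<gamma>\<bar>)"

end

theory Submission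
  imports Defs
begin

text \<open>Each term of y is within 1/(2a^2) of the grid point (c-1)/a. These error intervals
  are disjoint and lie inside [0,1), so y is strictly increasing with gaps
  1/a \<plusminus> 1/a^2; and since the counting function of a strictly increasing sequence
  below \<gamma> is the length of an initial segment, it differs from a\<gamma> by at most
  1 + 1/(2a).\<close>

definition near_grid :: "nat \<Rightarrow> (nat \<Rightarrow> real) \<Rightarrow> bool" where
  "near_grid a x \<longleftrightarrow>
     (\<forall>c\<in>{1..a}. \<bar>x c - (real c - 1) / real a\<bar> \<le> 1 / (2 * real a ^ 2))"

lemma strict_mono_on_count_less:
  fixes x :: "nat \<Rightarrow> 'a::linorder"
  assumes "strict_mono_on {1..a} x"
  shows "{k\<in>{1..a}. x k < \<gamma>} = {1..card {k\<in>{1..a}. x k < \<gamma>}}"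
proof (cases "{k\<in>{1..a}. x k < \<gamma>} = {}")
  case False
  define S where "S = {k\<in>{1..a}. x k < \<gamma>}"
  define m where "m = Max S"
  have "finite S" by (simp add: S_def)
  then have m: "m \<in> S" using False unfolding m_def S_def by (intro Max_in) auto
  have "S = {1..m}"
  proof
    show "S \<subseteq> {1..m}" using \<open>finite S\<close> by (auto simp: m_def S_def)
    show "{1..m} \<subseteq> S"
    proof
      fix k assume k: "k \<in> {1..m}"
      with m have "x k \<le> x m"
        by (intro strict_mono_on_leD[OF assms]) (auto simp: S_def)
      with k m show "k \<in> S" by (auto simp: S_def)
    qed
  qed
  then show ?thesis by (simp add: S_def)
qed simp

lemma near_grid_scaled:
  assumes "near_grid a x" and "c \<in> {1..a}"
  shows "\<bar>real a * x c - (real c - 1)\<bar> \<le> 1 / (2 * real a)"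
proof -
  have a: "real a > 0" using assms(2) by simp
  have "real a * x c - (real c - 1) = real a * (x c - (real c - 1) / real a)"
    using a by (simp add: field_simps)
  then have "\<bar>real a * x c - (real c - 1)\<bar> = real a * \<bar>x c - (real c - 1) / real a\<bar>"
    using a by (simp add: abs_mult)
  also have "\<dots> \<le> real a * (1 / (2 * real a ^ 2))"
    using assms a unfolding near_grid_def by (intro mult_left_mono) auto
  also have "\<dots> = 1 / (2 * real a)"
    using a by (simp add: power2_eq_square)
  finally show ?thesis .
qed

lemma near_grid_strict_mono_on:
  assumes "near_grid a x"
  shows "strict_mono_on {1..a} x"
proof (rule strict_mono_onI)
  fix k j assume k: "k \<in> {1..a}" and j: "j \<in> {1..a}" and "k < j"
  then have "real a \<ge> 2" "real k + 1 \<le> real j" by auto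
  then have "1 / (2 * real a) \<le> 1 / 4" by (simp add: field_simps)
  then have "real a * x k < real a * x j"
    using near_grid_scaled[OF assms k] near_grid_scaled[OF assms j] \<open>real k + 1 \<le> real j\<close>
    by (simp add: abs_le_iff)
  then show "x k < x j" using k by simp
qed

lemma near_grid_less_one:
  assumes "near_grid a x" and "c \<in> {1..a}"
  shows "x c < 1"
proof -
  have "1 / (2 * real a) \<le> 1 / 2" "real c \<le> real a" using assms(2) by (auto simp: field_simps)
  then have "real a * x c < real a * 1"
    using near_grid_scaled[OF assms] by (simp add: abs_le_iff)
  then show ?thesis using assms(2) by simp
qed

lemma near_grid_gap:
  assumes grid: "near_grid a x" and n: "n \<in> {1..<a}"
  shows "\<bar>x (n + 1) - x n - 1 / real a\<bar> \<le> 1 / real a ^ 2"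
proof -
  have a: "real a > 0" using n by simp
  have "2 * (1 / (2 * real a)) = 1 / real a" by simp
  then have "\<bar>real a * x (n + 1) - real a * x n - 1\<bar> \<le> 1 / real a"
    using near_grid_scaled[OF grid, of n] near_grid_scaled[OF grid, of "n + 1"] n
    unfolding abs_le_iff by (simp only: of_nat_add of_nat_1) auto
  moreover have "x (n + 1) - x n - 1 / real a = (real a * x (n + 1) - real a * x n - 1) / real a"
    using a by (simp add: field_simps)
  ultimately have "\<bar>x (n + 1) - x n - 1 / real a\<bar> \<le> (1 / real a) / real a"
    using divide_right_mono[of _ "1 / real a" "real a"] a by simp
  then show ?thesis by (simp add: power2_eq_square)
qed

lemma near_grid_almost_AP:
  assumes grid: "near_grid a x" and "a \<ge> 1" and "0 \<le> x 1"
  shows "almost_AP (1 / real a) (1 / real a) a x"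
proof -
  have a: "real a > 0" and last: "a \<in> {1..a}" using \<open>a \<ge> 1\<close> by auto
  have mono: "strict_mono_on {1..a} x" using near_grid_strict_mono_on[OF grid] .
  have "real a * x 1 \<le> 1 / (2 * real a)"
    using near_grid_scaled[OF grid, of 1] \<open>a \<ge> 1\<close> by (simp add: abs_le_iff)
  also have "\<dots> \<le> real a * (1 / real a + 1 / real a * (1 / real a))"
    using a by (simp add: field_simps)
  finally have first_le: "x 1 \<le> 1 / real a + 1 / real a * (1 / real a)"
    using a by simp
  have "real a * (1 - 1 / real a - 1 / real a * (1 / real a)) = real a - 1 - 1 / real a"
    using a by (simp add: field_simps)
  also have "\<dots> \<le> real a * x a"
    using near_grid_scaled[OF grid last] a by (simp add: abs_le_iff field_simps)
  finally have last_ge: "1 - 1 / real a - 1 / real a * (1 / real a) \<le> x a"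
    using a by (simp only: mult_le_cancel_left_pos)
  show ?thesis
    unfolding almost_AP_def
  proof (intro conjI ballI exI[of _ "1 / real a"])
    fix n assume n: "n \<in> {1..a}"
    show "x n < 1" using near_grid_less_one[OF grid n] .
    show "0 \<le> x n" using strict_mono_on_leD[OF mono, of 1 n] n \<open>0 \<le> x 1\<close> by auto
  next
    fix n assume "n \<in> {1..<a}"
    then show "x n < x (n + 1)" using strict_mono_onD[OF mono, of n "n + 1"] by simp
  next
    fix n assume "n \<in> {1..a - 1}"
    then have "n \<in> {1..<a}" by auto
    then have "\<bar>x (n + 1) - x n - 1 / real a\<bar> \<le> 1 / real a * (1 / real a)"
      using near_grid_gap[OF grid] by (simp add: power2_eq_square)
    then show "1 / real a - 1 / real a * (1 / real a) \<le> x (n + 1) - x n"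
      and "x (n + 1) - x n \<le> 1 / real a + 1 / real a * (1 / real a)"
      by (simp_all add: abs_le_iff)
  qed (use \<open>a \<ge> 1\<close> a \<open>0 \<le> x 1\<close> first_le last_ge near_grid_less_one[OF grid last] in auto)
qed

lemma near_grid_star_discrepancy:
  assumes grid: "near_grid a x" and "a \<ge> 1"
  shows "star_discrepancy a x \<le> 2 / real a"
  unfolding star_discrepancy_def
proof (rule cSUP_least)
  show "{0<..(1::real)} \<noteq> {}" by simp
  fix \<gamma> :: real assume \<gamma>: "\<gamma> \<in> {0<..1}"
  have a: "real a > 0" using \<open>a \<ge> 1\<close> by simp
  define m where "m = card {k\<in>{1..a}. x k < \<gamma>}"
  have S: "{k\<in>{1..a}. x k < \<gamma>} = {1..m}"
    unfolding m_def by (rule strict_mono_on_count_less[OF near_grid_strict_mono_on[OF grid]])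
  have "card {k\<in>{1..a}. x k < \<gamma>} \<le> card {1..a}" by (rule card_mono) auto
  then have "m \<le> a" by (simp add: m_def)
  have err: "1 / (2 * real a) \<le> 1" using a by (simp add: field_simps)
  have "real m - 1 - 1 / (2 * real a) < real a * \<gamma>"
  proof (cases "m = 0")
    case False
    then have "m \<in> {k\<in>{1..a}. x k < \<gamma>}" unfolding S by simp
    then have m: "m \<in> {1..a}" "x m < \<gamma>" by simp_all
    have "real m - 1 - 1 / (2 * real a) \<le> real a * x m"
      using near_grid_scaled[OF grid m(1)] by (simp add: abs_le_iff)
    also have "\<dots> < real a * \<gamma>" using m(2) a by simp
    finally show ?thesis .
  next
    case True
    have "0 < real a * \<gamma>" "0 \<le> 1 / (2 * real a)" using a \<gamma> by auto
    then show ?thesis using True by linarith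
  qed
  moreover have "real a * \<gamma> \<le> real m + 1 / (2 * real a)"
  proof (cases "m = a")
    case False
    then have m: "m + 1 \<in> {1..a}" using \<open>m \<le> a\<close> by simp
    have "m + 1 \<notin> {k\<in>{1..a}. x k < \<gamma>}" unfolding S by simp
    with m have "\<gamma> \<le> x (m + 1)" by simp
    have "real a * \<gamma> \<le> real a * x (m + 1)" using \<open>\<gamma> \<le> x (m + 1)\<close> a by simp
    also have "\<dots> \<le> real m + 1 / (2 * real a)"
      using near_grid_scaled[OF grid m] by (simp add: abs_le_iff)
    finally show ?thesis .
  next
    case True
    have "real a * \<gamma> \<le> real a" "0 \<le> 1 / (2 * real a)" using \<gamma> a by auto
    then show ?thesis using True by linarith
  qed
  ultimately have "\<bar>real m - real a * \<gamma>\<bar> \<le> 2" using err by linarith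
  then have "\<bar>real m / real a - \<gamma>\<bar> * real a \<le> 2"
    using a by (simp add: field_simps abs_mult flip: abs_of_pos)
  then show "\<bar>real (card {k\<in>{1..a}. x k < \<gamma>}) / real a - \<gamma>\<bar> \<le> 2 / real a"
    using a by (simp add: m_def field_simps)
qed

lemma Q_special_near_grid:
  assumes "Q_special q F" and "(a, b, 1) \<in> SQ q"
  shows "near_grid a (\<lambda>c. real_of_int (F (a, b, c)) / real (q (phiQ q (a, b, c))))"
  unfolding near_grid_def
proof
  fix c assume c: "c \<in> {1..a}"
  show "\<bar>real_of_int (F (a, b, c)) / real (q (phiQ q (a, b, c))) - (real c - 1) / real a\<bar>
        \<le> 1 / (2 * real a ^ 2)"
  proof (cases "c = 1")
    case True
    then show ?thesis using assms by (simp add: Q_special_def)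
  next
    case False
    then have "(a, b, c) \<in> SQ q" "c > 1" using c assms(2) by (auto simp: SQ_def)
    then have "real_of_int (F (a, b, c)) / real (q (phiQ q (a, b, c)))
        \<in> {(real c - 1) / real a - 1 / (2 * real a ^ 2) .. (real c - 1) / real a + 1 / (2 * real a ^ 2)}"
      using conjunct2[OF assms(1)[unfolded Q_special_def], rule_format, of a b c] by blast
    then show ?thesis by (simp add: abs_le_iff)
  qed
qed

theorem mainTheorem14:
  fixes q :: "nat \<Rightarrow> nat" and F :: "nat \<times> nat \<times> nat \<Rightarrow> int" and a b :: nat
  assumes "basic_seq q" and "infinite_in_limit q"
    and "Q_special q F"
    and "(a, b, 1) \<in> SQ q"
  shows "almost_AP (1 / real a) (1 / real a) a
           (\<lambda>c. real_of_int (F (a, b, c)) / real (q (phiQ q (a, b, c))))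
       \<and> star_discrepancy a
           (\<lambda>c. real_of_int (F (a, b, c)) / real (q (phiQ q (a, b, c)))) \<le> 2 / real a"
proof -
  have grid: "near_grid a (\<lambda>c. real_of_int (F (a, b, c)) / real (q (phiQ q (a, b, c))))"
    using Q_special_near_grid[OF assms(3,4)] .
  have "a \<ge> 1" using assms(4) by (simp add: SQ_def)
  moreover have "F (a, b, 1) = 0" using assms(3,4) by (simp add: Q_special_def)
  ultimately show ?thesis
    using near_grid_almost_AP[OF grid] near_grid_star_discrepancy[OF grid] by simp
qed

end
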